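(* Define $a_n=0$ if $n$ is not a power of $2$, $a_1=1$, and $a_{2^k}=(-1)^{k+1}$ for $k\ge1$. Then the operator $Tf(x)=f(x)+f(2x)-f(4x)+f(8x)-f(16x)+\dots=\sum_n a_nf(nx)$ satisfies $\|Tf\|_{L^2}=\sqrt2\,\|f\|_{L^2}$ for all $f\in C_0(0,\infty)$, and hence extends to $\sqrt2$ times a unitary operator on $L^2[0,\infty)$.
   Context: $C_0(0,\infty)$ denotes continuous compactly supported functions on $(0,\infty)$; $L^2=L^2[0,\infty)$ with Lebesgue measure. *)

theory Defs
  imports "HOL-Analysis.Analysis"
begin

definition coeff_a :: "nat \<Rightarrow> real" where
  "coeff_a n = (if n = 1 then 1
     else if (\<exists>k\<ge>1. n = 2 ^ k) then (-1) ^ (Suc (THE k. n = 2 ^ k))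
     else 0)"

text \<open>C_0(0,infinity): continuous on (0,infinity), support in a compact subset of (0,infinity);
  functions are extended by zero outside (0,infinity).\<close>
definition C0_pos :: "(real \<Rightarrow> complex) set" where
  "C0_pos = {f. continuous_on {0<..} f \<and>
     (\<exists>K. compact K \<and> K \<subseteq> {0<..} \<and> (\<forall>x. x \<notin> K \<longrightarrow> f x = 0))}"

definition T_op :: "(real \<Rightarrow> complex) \<Rightarrow> real \<Rightarrow> complex" where
  "T_op f x = (\<Sum>n. complex_of_real (coeff_a n) * f (real n * x))"

definition L2norm :: "(real \<Rightarrow> complex) \<Rightarrow> real" where
  "L2norm g = sqrt (set_lebesgue_integral lborel {0..} (\<lambda>x. (cmod (g x))\<^sup>2))"

definition L2_pos :: "(real \<Rightarrow> complex) set" where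
  "L2_pos = {g. g \<in> borel_measurable lborel \<and>
     set_integrable lborel {0..} (\<lambda>x. (cmod (g x))\<^sup>2)}"

end

theory Submission
  imports Defs
begin

text \<open>For \<open>f \<in> C\<^sub>0(0,\<infinity>)\<close> the alternating dyadic sum \<open>G x = \<Sum>k. (-1)^k f (2^k x)\<close> is a finite
  sum at every point, bounded, supported in \<open>[0,b]\<close>, and solves \<open>f = G + G(2\<cdot>)\<close>; telescoping the
  coefficients \<open>a (2^k)\<close> then gives \<open>T f = G + 2 G(2\<cdot>)\<close>. Since \<open>\<parallel>G(2\<cdot>)\<parallel>\<^sup>2 = \<parallel>G\<parallel>\<^sup>2 / 2\<close>, expanding
  the squares gives \<open>\<parallel>f\<parallel>\<^sup>2 = 3/2 \<parallel>G\<parallel>\<^sup>2 + 2X\<close> and \<open>\<parallel>T f\<parallel>\<^sup>2 = 3 \<parallel>G\<parallel>\<^sup>2 + 4X\<close> with the same cross term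
  \<open>X\<close>, hence \<open>\<parallel>T f\<parallel>\<^sup>2 = 2 \<parallel>f\<parallel>\<^sup>2\<close>.

  The range is dense: for \<open>h \<in> C\<^sub>0\<close> and \<open>u = \<Sum>k\<le>N. (-1)^k 2^-(k+1) h(2^-(k+1) \<cdot>)\<close>, the function
  \<open>f = u + u(2\<cdot>)\<close> lies in \<open>C\<^sub>0\<close> and \<open>T f - h = \<plusminus>2^-(N+1) h(2^-(N+1) \<cdot>)\<close> has squared norm
  \<open>\<parallel>h\<parallel>\<^sup>2 / 2^(N+1)\<close>. It remains that \<open>C\<^sub>0\<close> is dense in \<open>L\<^sup>2\<close>: indicators of bounded Borel sets are
  approximated by Urysohn functions, bounded functions by finite staircases of indicators, and
  general ones by truncation and dominated convergence.\<close>

section \<open>Squared norm on \<open>L\<^sup>2[0,\<infinity>)\<close>\<close>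

definition L2sq :: "(real \<Rightarrow> complex) \<Rightarrow> real" where
  "L2sq g = (LINT x:{0..}|lborel. (cmod (g x))\<^sup>2)"

lemma L2norm_eq_sqrt_L2sq: "L2norm g = sqrt (L2sq g)"
  by (simp add: L2norm_def L2sq_def)

lemma L2sq_nonneg: "0 \<le> L2sq g"
  unfolding L2sq_def set_lebesgue_integral_def
  by (rule integral_nonneg_AE) (auto simp: indicator_def)

lemma set_integrable_bounded_support:
  fixes h :: "real \<Rightarrow> real"
  assumes "h \<in> borel_measurable lborel" and "\<And>x. \<bar>h x\<bar> \<le> M" and "\<And>x. x > b \<Longrightarrow> h x = 0"
  shows "set_integrable lborel {0..} h"
proof -
  have "0 \<le> M" using assms(2)[of 0] by linarith
  have "integrable lborel (\<lambda>x. M * indicator {0..b} x :: real)"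
    by (intro integrable_mult_right integrable_real_indicator) (auto simp: emeasure_lborel_Icc_eq)
  moreover have "(\<lambda>x. indicator {0..} x *\<^sub>R h x) \<in> borel_measurable lborel"
    using assms(1) by measurable
  moreover have "AE x in lborel. norm (indicator {0..} x *\<^sub>R h x) \<le> norm (M * indicator {0..b} x :: real)"
  proof (rule AE_I2)
    fix x
    show "norm (indicator {0..} x *\<^sub>R h x) \<le> norm (M * indicator {0..b} x :: real)"
      using assms(2)[of x] assms(3)[of x] \<open>0 \<le> M\<close>
      by (cases "x < 0"; cases "x > b") (auto simp: indicator_def)
  qed
  ultimately show ?thesis
    unfolding set_integrable_def by (rule Bochner_Integration.integrable_bound)
qed

lemma L2_pos_bounded_support:
  assumes "g \<in> borel_measurable lborel" and "\<And>x. cmod (g x) \<le> M" and "\<And>x. x > b \<Longrightarrow> g x = 0"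
  shows "g \<in> L2_pos"
proof -
  have "set_integrable lborel {0..} (\<lambda>x. (cmod (g x))\<^sup>2)"
    by (rule set_integrable_bounded_support[where M = "M\<^sup>2" and b = b])
      (use assms in \<open>simp_all add: power_mono\<close>)
  then show ?thesis using assms(1) by (simp add: L2_pos_def)
qed

lemma norm_add_squared_le:
  fixes u v :: "'a :: real_normed_vector"
  shows "(norm (u + v))\<^sup>2 \<le> 2 * (norm u)\<^sup>2 + 2 * (norm v)\<^sup>2"
proof -
  have "(norm (u + v))\<^sup>2 \<le> (norm u + norm v)\<^sup>2"
    by (simp add: norm_triangle_ineq power_mono)
  also have "\<dots> \<le> 2 * (norm u)\<^sup>2 + 2 * (norm v)\<^sup>2"
    using zero_le_power2[of "norm u - norm v"] unfolding power2_sum power2_diff by linarith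
  finally show ?thesis .
qed

lemma L2_pos_add:
  assumes u: "u \<in> L2_pos" and v: "v \<in> L2_pos"
  shows "(\<lambda>x. u x + v x) \<in> L2_pos" and "L2sq (\<lambda>x. u x + v x) \<le> 2 * L2sq u + 2 * L2sq v"
proof -
  have ui: "set_integrable lborel {0..} (\<lambda>x. (cmod (u x))\<^sup>2)"
    and vi: "set_integrable lborel {0..} (\<lambda>x. (cmod (v x))\<^sup>2)"
    and m: "(\<lambda>x. u x + v x) \<in> borel_measurable lborel"
    using u v by (auto simp: L2_pos_def)
  have wi: "set_integrable lborel {0..} (\<lambda>x. 2 * (cmod (u x))\<^sup>2 + 2 * (cmod (v x))\<^sup>2)"
    using ui vi by (intro set_integral_add set_integrable_mult_right) auto
  have si: "set_integrable lborel {0..} (\<lambda>x. (cmod (u x + v x))\<^sup>2)"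
    by (rule set_integrable_bound[OF wi])
      (use m norm_add_squared_le in \<open>auto simp: set_borel_measurable_def\<close>)
  then show "(\<lambda>x. u x + v x) \<in> L2_pos" using m by (simp add: L2_pos_def)
  have "L2sq (\<lambda>x. u x + v x) \<le> (LINT x:{0..}|lborel. 2 * (cmod (u x))\<^sup>2 + 2 * (cmod (v x))\<^sup>2)"
    unfolding L2sq_def by (rule set_integral_mono[OF si wi]) (rule norm_add_squared_le)
  also have "\<dots> = 2 * L2sq u + 2 * L2sq v"
    using ui vi by (simp add: L2sq_def set_integral_add)
  finally show "L2sq (\<lambda>x. u x + v x) \<le> 2 * L2sq u + 2 * L2sq v" .
qed

lemma L2_pos_scale:
  assumes u: "u \<in> L2_pos"
  shows "(\<lambda>x. c * u x) \<in> L2_pos" and "L2sq (\<lambda>x. c * u x) = (cmod c)\<^sup>2 * L2sq u"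
proof -
  have eq: "(\<lambda>x. (cmod (c * u x))\<^sup>2) = (\<lambda>x. (cmod c)\<^sup>2 * (cmod (u x))\<^sup>2)"
    by (simp add: norm_mult power_mult_distrib)
  have "u \<in> borel_measurable lborel" using u by (simp add: L2_pos_def)
  then have "(\<lambda>x. c * u x) \<in> borel_measurable lborel" by measurable
  then show "(\<lambda>x. c * u x) \<in> L2_pos"
    using u set_integrable_mult_right[of "(cmod c)\<^sup>2" lborel "{0..}" "\<lambda>x. (cmod (u x))\<^sup>2"]
    unfolding L2_pos_def mem_Collect_eq eq by simp
  show "L2sq (\<lambda>x. c * u x) = (cmod c)\<^sup>2 * L2sq u"
    unfolding L2sq_def eq by simp
qed

lemma L2_pos_diff:
  assumes u: "u \<in> L2_pos" and v: "v \<in> L2_pos"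
  shows "(\<lambda>x. u x - v x) \<in> L2_pos" and "L2sq (\<lambda>x. u x - v x) \<le> 2 * L2sq u + 2 * L2sq v"
  using L2_pos_add[OF u L2_pos_scale(1)[OF v, of "-1"]] L2_pos_scale(2)[OF v, of "-1"] by simp_all

lemma L2sq_diff_commute: "L2sq (\<lambda>x. u x - v x) = L2sq (\<lambda>x. v x - u x)"
  by (simp add: L2sq_def norm_minus_commute)

lemma L2sq_dilate:
  assumes s: "s > 0"
  shows "L2sq (\<lambda>x. G (s * x)) = L2sq G / s"
proof -
  have "L2sq G = (\<integral>y. indicator {0..} y * (cmod (G y))\<^sup>2 \<partial>lborel)"
    by (simp add: L2sq_def set_lebesgue_integral_def)
  also have "\<dots> = s * (\<integral>x. indicator {0..} (s * x) * (cmod (G (s * x)))\<^sup>2 \<partial>lborel)"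
    using lborel_integral_real_affine[of s "\<lambda>y. indicator {0..} y * (cmod (G y))\<^sup>2" 0] s by simp
  also have "(\<lambda>x. indicator {0..} (s * x) * (cmod (G (s * x)))\<^sup>2) =
      (\<lambda>x. indicator {0..} x * (cmod (G (s * x)))\<^sup>2 :: real)"
    using s by (auto simp: indicator_def zero_le_mult_iff)
  finally show ?thesis
    using s by (simp add: L2sq_def set_lebesgue_integral_def)
qed

lemma L2sq_diff_triangle:
  assumes "(\<lambda>x. u x - v x) \<in> L2_pos" and "(\<lambda>x. v x - w x) \<in> L2_pos"
  shows "L2sq (\<lambda>x. u x - w x) \<le> 2 * L2sq (\<lambda>x. u x - v x) + 2 * L2sq (\<lambda>x. v x - w x)"
  using L2_pos_add(2)[OF assms] by simp

lemma L2sq_le_set_integral: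
  assumes "g \<in> L2_pos" and "set_integrable lborel {0..} B" and "\<And>x. (cmod (g x))\<^sup>2 \<le> B x"
  shows "L2sq g \<le> (LINT x:{0..}|lborel. B x)"
  unfolding L2sq_def using assms by (intro set_integral_mono) (auto simp: L2_pos_def)

section \<open>Compactly supported continuous functions\<close>

lemma C0_posE:
  assumes "f \<in> C0_pos"
  obtains a b M where "0 < a" "\<forall>x. f x \<noteq> 0 \<longrightarrow> a \<le> x \<and> x \<le> b" "\<forall>x. cmod (f x) \<le> M"
    "continuous_on UNIV f"
proof -
  obtain K where c: "continuous_on {0<..} f" and K: "compact K" "K \<subseteq> {0<..}"
    and z: "\<And>x. x \<notin> K \<Longrightarrow> f x = 0"
    using assms by (auto simp: C0_pos_def)
  show thesis
  proof (cases "K = {}")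
    case True
    then show ?thesis using z by (intro that[of 1 1 0]) auto
  next
    case False
    obtain a where a: "a \<in> K" "\<And>t. t \<in> K \<Longrightarrow> a \<le> t" using compact_attains_inf[OF K(1) False] by blast
    obtain b where b: "\<And>t. t \<in> K \<Longrightarrow> t \<le> b" using compact_attains_sup[OF K(1) False] by blast
    have "0 < a" using a K by auto
    have "compact (f ` K)" using compact_continuous_image[OF continuous_on_subset[OF c K(2)] K(1)] .
    then obtain M where M: "\<And>y. y \<in> f ` K \<Longrightarrow> norm y \<le> M" using compact_imp_bounded bounded_iff by metis
    have bounded: "cmod (f x) \<le> max M 0" for x
      using M[of "f x"] z[of x] by (cases "x \<in> K") auto
    have "continuous_on {..<a} f"
      by (rule continuous_on_cong[THEN iffD1, OF refl _ continuous_on_const[of _ 0]]) (use a z in force)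
    then have "continuous_on ({0<..} \<union> {..<a}) f" by (intro continuous_on_open_Un c) auto
    moreover have "{0<..} \<union> {..<a} = (UNIV :: real set)" using \<open>0 < a\<close> by auto
    ultimately have "continuous_on UNIV f" by simp
    show thesis
      using that[OF \<open>0 < a\<close> _ _ \<open>continuous_on UNIV f\<close>] bounded a b z by blast
  qed
qed

lemma C0_pos_imp_L2_pos:
  assumes "f \<in> C0_pos"
  shows "f \<in> L2_pos"
proof -
  obtain a b M where f: "0 < a" "\<forall>x. f x \<noteq> 0 \<longrightarrow> a \<le> x \<and> x \<le> b" "\<forall>x. cmod (f x) \<le> M"
    "continuous_on UNIV f"
    using assms by (rule C0_posE)
  show ?thesis
  proof (rule L2_pos_bounded_support[of f M b])
    show "f \<in> borel_measurable lborel" using borel_measurable_continuous_onI[OF f(4)] by simp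
    show "f x = 0" if "x > b" for x using f(2) that by fastforce
  qed (use f(3) in blast)
qed

lemma C0_pos_zero: "(\<lambda>x. 0) \<in> C0_pos"
  unfolding C0_pos_def by (intro CollectI conjI exI[of _ "{}"]) auto

lemma C0_pos_add:
  assumes "g \<in> C0_pos" and "h \<in> C0_pos"
  shows "(\<lambda>x. g x + h x) \<in> C0_pos"
proof -
  obtain K where "continuous_on {0<..} g" "compact K" "K \<subseteq> {0<..}" "\<And>x. x \<notin> K \<Longrightarrow> g x = 0"
    using assms(1) by (auto simp: C0_pos_def)
  moreover obtain L where "continuous_on {0<..} h" "compact L" "L \<subseteq> {0<..}" "\<And>x. x \<notin> L \<Longrightarrow> h x = 0"
    using assms(2) by (auto simp: C0_pos_def)
  ultimately show ?thesis unfolding C0_pos_def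
    by (intro CollectI conjI exI[of _ "K \<union> L"] continuous_on_add) auto
qed

lemma C0_pos_scale:
  assumes "h \<in> C0_pos"
  shows "(\<lambda>x. c * h x) \<in> C0_pos"
proof -
  obtain K where "continuous_on {0<..} h" "compact K" "K \<subseteq> {0<..}" "\<And>x. x \<notin> K \<Longrightarrow> h x = 0"
    using assms by (auto simp: C0_pos_def)
  then show ?thesis unfolding C0_pos_def
    by (intro CollectI conjI exI[of _ K] continuous_on_mult continuous_on_const) auto
qed

lemma C0_pos_sum:
  assumes "\<And>i. i \<in> I \<Longrightarrow> h i \<in> C0_pos"
  shows "(\<lambda>x. \<Sum>i\<in>I. h i x) \<in> C0_pos"
  using assms
proof (induction I rule: infinite_finite_induct)
  case (insert i I)
  then show ?case using C0_pos_add[of "h i" "\<lambda>x. \<Sum>i\<in>I. h i x"] by simp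
qed (simp_all add: C0_pos_zero)

lemma C0_pos_dilate:
  assumes "h \<in> C0_pos" and "0 < s"
  shows "(\<lambda>x. h (s * x)) \<in> C0_pos"
proof -
  obtain K where c: "continuous_on {0<..} h" and K: "compact K" "K \<subseteq> {0<..}"
    and z: "\<And>x. x \<notin> K \<Longrightarrow> h x = 0"
    using assms(1) by (auto simp: C0_pos_def)
  have "continuous_on {0<..} (\<lambda>x. h (s * x))"
    by (rule continuous_on_compose2[OF c]) (use assms(2) in \<open>auto intro!: continuous_intros\<close>)
  moreover have "compact ((\<lambda>x. x / s) ` K)"
    using assms(2) by (intro compact_continuous_image continuous_intros K(1)) auto
  moreover have "(\<lambda>x. x / s) ` K \<subseteq> {0<..}" using K(2) assms(2) by auto
  moreover have "h (s * x) = 0" if "x \<notin> (\<lambda>x. x / s) ` K" for x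
  proof -
    have "s * x \<notin> K" using that assms(2) by (metis image_eqI nonzero_mult_div_cancel_left less_irrefl)
    then show ?thesis by (rule z)
  qed
  ultimately show ?thesis unfolding C0_pos_def by blast
qed

section \<open>The operator on two-scale combinations\<close>

lemma coeff_a_1: "coeff_a 1 = 1"
  by (simp add: coeff_a_def)

lemma coeff_a_pow2_Suc: "coeff_a (2 ^ Suc k) = (-1) ^ k"
proof -
  have "(THE j. (2::nat) ^ Suc k = 2 ^ j) = Suc k"
  proof (rule the_equality)
    show "j = Suc k" if "(2::nat) ^ Suc k = 2 ^ j" for j
      using that power_inject_exp[of "2::nat" "Suc k" j] by (metis one_less_numeral_iff semiring_norm(76))
  qed simp
  moreover have "\<exists>j\<ge>1. (2::nat) ^ Suc k = 2 ^ j" by (intro exI[of _ "Suc k"]) simp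
  ultimately show ?thesis by (simp add: coeff_a_def)
qed

lemma coeff_a_nonzero_imp_pow2: "coeff_a n \<noteq> 0 \<Longrightarrow> \<exists>k. n = 2 ^ k"
  unfolding coeff_a_def by (metis power_0)

lemma dyadic_eventually_zero:
  fixes g :: "real \<Rightarrow> 'a::zero"
  assumes "\<And>y. y \<le> 0 \<Longrightarrow> g y = 0" and "\<And>y. y > b \<Longrightarrow> g y = 0"
  obtains m where "\<And>k. m \<le> k \<Longrightarrow> g (2 ^ k * x) = 0"
proof (cases "x \<le> 0")
  case True
  then show ?thesis using assms(1) by (intro that[of 0]) (simp add: mult_nonneg_nonpos)
next
  case False
  obtain m where m: "b / x < 2 ^ m" using real_arch_pow[of 2 "b / x"] by auto
  have "g (2 ^ k * x) = 0" if "m \<le> k" for k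
  proof (rule assms(2))
    have "b < 2 ^ m * x" using m False by (simp add: pos_divide_less_eq)
    moreover have "(2::real) ^ m \<le> 2 ^ k" using that by (intro power_increasing) auto
    then have "2 ^ m * x \<le> 2 ^ k * x" using False by (intro mult_right_mono) auto
    ultimately show "b < 2 ^ k * x" by linarith
  qed
  then show ?thesis by (rule that)
qed

lemma T_op_eq_finite_sum:
  assumes "\<And>k. L \<le> k \<Longrightarrow> f (2 ^ k * x) = 0"
  shows "T_op f x = (\<Sum>k<L. of_real (coeff_a (2 ^ k)) * f (2 ^ k * x))"
proof -
  let ?t = "\<lambda>n::nat. complex_of_real (coeff_a n) * f (real n * x)"
  have "T_op f x = sum ?t ((\<lambda>k. 2 ^ k) ` {..<L})"
    unfolding T_op_def
  proof (rule suminf_finite)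
    fix n :: nat assume n: "n \<notin> (\<lambda>k. 2 ^ k) ` {..<L}"
    show "?t n = 0"
    proof (cases "coeff_a n = 0")
      case False
      then obtain k where k: "n = 2 ^ k" using coeff_a_nonzero_imp_pow2 by blast
      with n have "L \<le> k" by (meson image_eqI lessThan_iff not_le)
      with k assms[of k] show ?thesis by simp
    qed simp
  qed simp
  also have "\<dots> = (\<Sum>k<L. ?t (2 ^ k))"
    by (rule sum.reindex_cong[of "\<lambda>k. 2 ^ k"]) (auto simp: inj_on_def power_inject_exp)
  finally show ?thesis by simp
qed

lemma coeff_a_telescope:
  fixes w :: "nat \<Rightarrow> 'a::real_algebra_1"
  shows "(\<Sum>k<Suc (Suc m). of_real (coeff_a (2 ^ k)) * (w k + w (Suc k)))
    = w 0 + 2 * w 1 + (-1) ^ m * w (Suc (Suc m))"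
proof (induction m)
  case 0
  show ?case using coeff_a_1 coeff_a_pow2_Suc[of 0] by (simp add: numeral_2_eq_2 mult_2)
next
  case (Suc m)
  have "(\<Sum>k<Suc (Suc (Suc m)). of_real (coeff_a (2 ^ k)) * (w k + w (Suc k)))
      = w 0 + 2 * w 1 + (-1) ^ m * w (Suc (Suc m))
        + of_real (coeff_a (2 ^ Suc (Suc m))) * (w (Suc (Suc m)) + w (Suc (Suc (Suc m))))"
    by (simp only: sum.lessThan_Suc[of _ "Suc (Suc m)"] Suc.IH)
  also have "\<dots> = w 0 + 2 * w 1 + (-1) ^ Suc m * w (Suc (Suc (Suc m)))"
    by (simp only: coeff_a_pow2_Suc) (simp add: algebra_simps)
  finally show ?case .
qed

lemma T_op_two_scale:
  assumes f: "\<And>y. f y = G y + G (2 * y)"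
    and G0: "\<And>y. y \<le> 0 \<Longrightarrow> G y = 0" and Gb: "\<And>y. y > b \<Longrightarrow> G y = 0"
  shows "T_op f x = G x + 2 * G (2 * x)"
proof -
  obtain m where m: "\<And>k. m \<le> k \<Longrightarrow> G (2 ^ k * x) = 0"
    using dyadic_eventually_zero[of G, OF G0 Gb] by blast
  have "f (2 ^ k * x) = 0" if "Suc (Suc m) \<le> k" for k
    using m[of k] m[of "Suc k"] that by (simp add: f mult.assoc)
  then have "T_op f x = (\<Sum>k<Suc (Suc m). of_real (coeff_a (2 ^ k)) * f (2 ^ k * x))"
    by (rule T_op_eq_finite_sum)
  also have "\<dots> = (\<Sum>k<Suc (Suc m). of_real (coeff_a (2 ^ k)) * (G (2 ^ k * x) + G (2 ^ Suc k * x)))"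
    by (simp add: f mult.assoc)
  also have "\<dots> = G (2 ^ 0 * x) + 2 * G (2 ^ 1 * x) + (-1) ^ m * G (2 ^ Suc (Suc m) * x)"
    by (rule coeff_a_telescope[of "\<lambda>k. G (2 ^ k * x)"])
  also have "\<dots> = G x + 2 * G (2 * x)"
    using m[of "Suc (Suc m)"] by simp
  finally show ?thesis .
qed

definition alt_dyadic_sum :: "(real \<Rightarrow> complex) \<Rightarrow> real \<Rightarrow> complex" where
  "alt_dyadic_sum f x = (\<Sum>k. (-1) ^ k * f (2 ^ k * x))"

lemma alt_dyadic_sum_eq_finite_sum:
  assumes "\<And>k. L \<le> k \<Longrightarrow> f (2 ^ k * x) = 0"
  shows "alt_dyadic_sum f x = (\<Sum>k<L. (-1) ^ k * f (2 ^ k * x))"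
  unfolding alt_dyadic_sum_def using assms by (intro suminf_finite) auto

lemma alt_dyadic_sum_eq_0:
  assumes f0: "\<And>y. y \<le> 0 \<Longrightarrow> f y = 0" and fb: "\<And>y. y > b \<Longrightarrow> f y = 0"
    and x: "x \<le> 0 \<or> x > b"
  shows "alt_dyadic_sum f x = 0"
proof -
  have "f (2 ^ k * x) = 0" for k :: nat
  proof (cases "x \<le> 0")
    case True
    then show ?thesis by (intro f0) (simp add: mult_nonneg_nonpos)
  next
    case False
    then have "x \<le> 2 ^ k * x" by simp
    then show ?thesis using x False by (intro fb) linarith
  qed
  then show ?thesis using alt_dyadic_sum_eq_finite_sum[of 0 f x] by simp
qed

lemma alt_dyadic_sum_two_scale:
  assumes f0: "\<And>y. y \<le> 0 \<Longrightarrow> f y = 0" and fb: "\<And>y. y > b \<Longrightarrow> f y = 0"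
  shows "f x = alt_dyadic_sum f x + alt_dyadic_sum f (2 * x)"
proof -
  obtain m where m: "\<And>k. m \<le> k \<Longrightarrow> f (2 ^ k * x) = 0"
    using dyadic_eventually_zero[of f, OF f0 fb] by blast
  have dilate: "2 ^ k * (2 * x) = 2 ^ Suc k * x" for k :: nat by (simp add: mult_ac)
  have "alt_dyadic_sum f x = (\<Sum>k<Suc m. (-1) ^ k * f (2 ^ k * x))"
    by (rule alt_dyadic_sum_eq_finite_sum) (simp add: m)
  also have "\<dots> = f x - (\<Sum>k<m. (-1) ^ k * f (2 ^ k * (2 * x)))"
    by (simp only: sum.lessThan_Suc_shift dilate) (simp add: sum_negf)
  also have "(\<Sum>k<m. (-1) ^ k * f (2 ^ k * (2 * x))) = alt_dyadic_sum f (2 * x)"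
    by (rule alt_dyadic_sum_eq_finite_sum[symmetric]) (simp only: dilate m le_SucI)
  finally show ?thesis by simp
qed

lemma alt_dyadic_sum_measurable:
  assumes meas: "f \<in> borel_measurable borel"
    and f0: "\<And>y. y \<le> 0 \<Longrightarrow> f y = 0" and fb: "\<And>y. y > b \<Longrightarrow> f y = 0"
  shows "alt_dyadic_sum f \<in> borel_measurable borel"
proof (rule borel_measurable_LIMSEQ_metric)
  show "(\<lambda>x. \<Sum>k<n. (-1) ^ k * f (2 ^ k * x)) \<in> borel_measurable borel" for n
    using meas by measurable
  fix x
  obtain m where "\<And>k. m \<le> k \<Longrightarrow> f (2 ^ k * x) = 0"
    using dyadic_eventually_zero[of f, OF f0 fb] by blast
  then have "summable (\<lambda>k. (-1) ^ k * f (2 ^ k * x))"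
    by (intro summable_finite[of "{..<m}"]) auto
  then show "(\<lambda>n. \<Sum>k<n. (-1) ^ k * f (2 ^ k * x)) \<longlonglongrightarrow> alt_dyadic_sum f x"
    unfolding alt_dyadic_sum_def by (rule summable_LIMSEQ)
qed

lemma alt_dyadic_sum_bounded:
  assumes a: "0 < a" and supp: "\<And>y. f y \<noteq> 0 \<Longrightarrow> a \<le> y \<and> y \<le> b"
    and bd: "\<And>y. cmod (f y) \<le> M" and P: "b < 2 ^ P * a"
  shows "cmod (alt_dyadic_sum f x) \<le> P * M"
proof (cases "x > 0")
  case False
  have "M \<ge> 0" using bd[of 0] norm_ge_zero order_trans by blast
  moreover have "alt_dyadic_sum f x = 0"
    using False a supp by (intro alt_dyadic_sum_eq_0[of f b]) force+
  ultimately show ?thesis by simp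
next
  case True
  have "\<exists>k::nat. a \<le> 2 ^ k * x"
  proof -
    obtain k where "a / x < 2 ^ k" using real_arch_pow[of 2 "a / x"] by auto
    then show ?thesis using True by (intro exI[of _ k]) (simp add: divide_less_eq)
  qed
  define j where "j = (LEAST k::nat. a \<le> 2 ^ k * x)"
  have j: "a \<le> 2 ^ j * x" unfolding j_def by (rule LeastI_ex) fact
  have below: "\<not> a \<le> 2 ^ k * x" if "k < j" for k
    using not_less_Least[OF that[unfolded j_def]] .
  have "alt_dyadic_sum f x = (\<Sum>k\<in>{j..<j + P}. (-1) ^ k * f (2 ^ k * x))"
    unfolding alt_dyadic_sum_def
  proof (rule suminf_finite)
    fix k assume k: "k \<notin> {j..<j + P}"
    show "(-1) ^ k * f (2 ^ k * x) = 0"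
    proof (cases "k < j")
      case True
      then show ?thesis using below[OF True] supp by fastforce
    next
      case False
      then have "(2::real) ^ (j + P) \<le> 2 ^ k" using k by (intro power_increasing) auto
      then have "2 ^ P * (2 ^ j * x) \<le> 2 ^ k * x"
        using True by (simp add: power_add mult_right_mono mult.assoc mult.commute)
      moreover have "2 ^ P * a \<le> 2 ^ P * (2 ^ j * x)" using j by simp
      ultimately have "b < 2 ^ k * x" using P by linarith
      then show ?thesis using supp by fastforce
    qed
  qed simp
  also have "cmod \<dots> \<le> (\<Sum>k\<in>{j..<j + P}. M)"
    by (rule sum_norm_le) (simp add: norm_mult norm_power bd)
  finally show ?thesis by simp
qed

lemma cmod_add_scaled_squared:
  fixes u v :: complex and c :: real
  shows "(cmod (u + of_real c * v))\<^sup>2 = (cmod u)\<^sup>2 + c\<^sup>2 * (cmod v)\<^sup>2 + 2 * c * Re (u * cnj v)"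
  unfolding cmod_power2 by (simp add: power2_eq_square algebra_simps)

lemma L2sq_add_scaled_dilate:
  fixes G :: "real \<Rightarrow> complex" and c :: real
  assumes meas: "G \<in> borel_measurable borel" and bd: "\<And>x. cmod (G x) \<le> M"
    and Gb: "\<And>x. x > b \<Longrightarrow> G x = 0"
  shows "L2sq (\<lambda>x. G x + of_real c * G (2 * x))
    = (1 + c\<^sup>2 / 2) * L2sq G + 2 * c * (LINT x:{0..}|lborel. Re (G x * cnj (G (2 * x))))"
proof -
  define B where "B = max b 0"
  have GB: "G x = 0" "G (2 * x) = 0" if "x > B" for x
    using Gb that by (simp_all add: B_def)
  have M0: "0 \<le> M" using bd[of 0] norm_ge_zero order_trans by blast
  have "set_integrable lborel {0..} (\<lambda>x. (cmod (G x))\<^sup>2)"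
    by (rule set_integrable_bounded_support[where M = "M\<^sup>2" and b = B]) (use meas GB bd in \<open>auto intro: power_mono\<close>)
  moreover have "set_integrable lborel {0..} (\<lambda>x. (cmod (G (2 * x)))\<^sup>2)"
    by (rule set_integrable_bounded_support[where M = "M\<^sup>2" and b = B]) (use meas GB bd in \<open>auto intro: power_mono\<close>)
  moreover have "set_integrable lborel {0..} (\<lambda>x. Re (G x * cnj (G (2 * x))))"
  proof (rule set_integrable_bounded_support[where M = "M * M" and b = B])
    have "(\<lambda>x. Re (G x) * Re (G (2 * x)) + Im (G x) * Im (G (2 * x))) \<in> borel_measurable borel"
      using meas by measurable
    then show "(\<lambda>x. Re (G x * cnj (G (2 * x)))) \<in> borel_measurable lborel" by simp
    fix x
    have "\<bar>Re (G x * cnj (G (2 * x)))\<bar> \<le> cmod (G x) * cmod (G (2 * x))"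
      using abs_Re_le_cmod[of "G x * cnj (G (2 * x))"] by (simp add: norm_mult)
    also have "\<dots> \<le> M * M" by (rule mult_mono) (simp_all add: bd M0)
    finally show "\<bar>Re (G x * cnj (G (2 * x)))\<bar> \<le> M * M" .
  qed (simp add: GB)
  ultimately have "L2sq (\<lambda>x. G x + of_real c * G (2 * x))
      = L2sq G + c\<^sup>2 * L2sq (\<lambda>x. G (2 * x)) + 2 * c * (LINT x:{0..}|lborel. Re (G x * cnj (G (2 * x))))"
    by (simp add: L2sq_def cmod_add_scaled_squared set_integral_add set_integrable_mult_right)
  then show ?thesis using L2sq_dilate[of 2 G] by (simp add: algebra_simps)
qed

lemma L2sq_two_scale_isometry:
  fixes G :: "real \<Rightarrow> complex"
  assumes "G \<in> borel_measurable borel" and "\<And>x. cmod (G x) \<le> M" and "\<And>x. x > b \<Longrightarrow> G x = 0"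
  shows "L2sq (\<lambda>x. G x + 2 * G (2 * x)) = 2 * L2sq (\<lambda>x. G x + G (2 * x))"
  using L2sq_add_scaled_dilate[OF assms, where c = 2] L2sq_add_scaled_dilate[OF assms, where c = 1]
  by (simp add: algebra_simps)

lemma L2sq_T_op:
  assumes "f \<in> C0_pos"
  shows "L2sq (T_op f) = 2 * L2sq f"
proof -
  obtain a b M where a: "0 < a" and supp: "\<forall>x. f x \<noteq> 0 \<longrightarrow> a \<le> x \<and> x \<le> b"
    and bd: "\<forall>x. cmod (f x) \<le> M" and cont: "continuous_on UNIV f"
    using assms by (rule C0_posE)
  obtain P where "b / a < 2 ^ P" using real_arch_pow[of 2 "b / a"] by auto
  then have P: "b < 2 ^ P * a" using a by (simp add: pos_divide_less_eq)
  have f0: "f y = 0" if "y \<le> 0" for y using supp a that by force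
  have fb: "f y = 0" if "y > b" for y using supp that by force
  let ?G = "alt_dyadic_sum f"
  have G0: "?G y = 0" if "y \<le> 0" for y using that by (intro alt_dyadic_sum_eq_0[of f, OF f0 fb]) auto
  have Gb: "?G y = 0" if "y > b" for y using that by (intro alt_dyadic_sum_eq_0[of f, OF f0 fb]) auto
  have f_eq: "f = (\<lambda>x. ?G x + ?G (2 * x))"
    using alt_dyadic_sum_two_scale[of f, OF f0 fb] by blast
  have T_eq: "T_op f = (\<lambda>x. ?G x + 2 * ?G (2 * x))"
    using T_op_two_scale[of f ?G, OF _ G0 Gb] alt_dyadic_sum_two_scale[of f, OF f0 fb] by blast
  have "?G \<in> borel_measurable borel"
    using borel_measurable_continuous_onI[OF cont] f0 fb by (rule alt_dyadic_sum_measurable)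
  moreover have "cmod (?G x) \<le> P * M" for x
    using a supp bd P by (intro alt_dyadic_sum_bounded) auto
  ultimately show ?thesis
    unfolding T_eq by (subst f_eq) (rule L2sq_two_scale_isometry[OF _ _ Gb])
qed

lemma alternating_sum_telescope:
  fixes w :: "nat \<Rightarrow> 'a::comm_ring_1"
  shows "(\<Sum>k\<le>N. (-1) ^ k * w (Suc k)) + (\<Sum>k\<le>N. (-1) ^ k * w k) = w 0 + (-1) ^ N * w (Suc N)"
  by (induction N) (simp_all add: algebra_simps)

lemma T_op_approximates_C0:
  assumes h: "h \<in> C0_pos" and \<delta>: "0 < \<delta>"
  obtains f where "f \<in> C0_pos" and "(\<lambda>x. T_op f x - h x) \<in> L2_pos"
    and "L2sq (\<lambda>x. T_op f x - h x) < \<delta>"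
proof -
  obtain N :: nat where N: "L2sq h / \<delta> < 2 ^ N" using real_arch_pow[of 2 "L2sq h / \<delta>"] by auto
  define u where "u x = (\<Sum>k\<le>N. (-1) ^ k / 2 ^ Suc k * h (x / 2 ^ Suc k))" for x
  have "(\<lambda>x. h (x / 2 ^ Suc k)) \<in> C0_pos" for k
    using C0_pos_dilate[OF h, of "1 / 2 ^ Suc k"] by simp
  then have u: "u \<in> C0_pos"
    unfolding u_def[abs_def] by (intro C0_pos_sum C0_pos_scale)
  define f where "f x = u x + u (2 * x)" for x
  have "f \<in> C0_pos"
    unfolding f_def[abs_def] by (intro C0_pos_add u C0_pos_dilate[OF u]) simp
  obtain a b M where "0 < a" and supp: "\<forall>x. u x \<noteq> 0 \<longrightarrow> a \<le> x \<and> x \<le> b"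
    and "\<forall>x. cmod (u x) \<le> M" and "continuous_on UNIV u"
    using u by (rule C0_posE)
  have Tf: "T_op f x = u x + 2 * u (2 * x)" for x
  proof (rule T_op_two_scale[of f u b])
    show "u y = 0" if "y \<le> 0" for y using supp \<open>0 < a\<close> that by force
    show "u y = 0" if "y > b" for y using supp that by force
  qed (simp add: f_def)
  define c :: complex where "c = (-1) ^ N / 2 ^ Suc N"
  define s :: real where "s = 1 / 2 ^ Suc N"
  have s: "0 < s" by (simp add: s_def)
  have remainder: "T_op f x - h x = c * h (s * x)" for x
  proof -
    define w where "w k = h (x / 2 ^ k) / 2 ^ k" for k
    have "u x = (\<Sum>k\<le>N. (-1) ^ k * w (Suc k))"
      unfolding u_def w_def by (rule sum.cong) simp_all
    moreover have "2 * u (2 * x) = (\<Sum>k\<le>N. (-1) ^ k * w k)"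
      unfolding u_def w_def sum_distrib_left by (rule sum.cong) (simp_all add: field_simps)
    ultimately have "T_op f x = w 0 + (-1) ^ N * w (Suc N)"
      unfolding Tf using alternating_sum_telescope[of w N] by simp
    then show ?thesis by (simp add: w_def c_def s_def)
  qed
  have hs: "(\<lambda>x. h (s * x)) \<in> L2_pos" by (intro C0_pos_imp_L2_pos C0_pos_dilate h s)
  have L2: "(\<lambda>x. T_op f x - h x) \<in> L2_pos"
    unfolding remainder by (rule L2_pos_scale(1)[OF hs])
  have "L2sq (\<lambda>x. T_op f x - h x) = (cmod c)\<^sup>2 * (L2sq h / s)"
    unfolding remainder L2_pos_scale(2)[OF hs] L2sq_dilate[OF s] ..
  also have "\<dots> = L2sq h / 2 ^ Suc N"
    by (simp add: c_def s_def norm_divide norm_power power2_eq_square)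
  also have "\<dots> \<le> L2sq h / 2 ^ N" by (simp add: L2sq_nonneg frac_le)
  also have "\<dots> < \<delta>" using N \<delta> by (simp add: divide_less_eq mult.commute)
  finally show thesis by (rule that[OF \<open>f \<in> C0_pos\<close> L2])
qed

section \<open>Density of \<open>C\<^sub>0(0,\<infinity>)\<close> in \<open>L\<^sup>2[0,\<infinity>)\<close>\<close>

definition C0_approximable :: "(real \<Rightarrow> complex) \<Rightarrow> bool" where
  "C0_approximable g \<longleftrightarrow> g \<in> L2_pos \<and> (\<forall>\<delta>>0. \<exists>h\<in>C0_pos. L2sq (\<lambda>x. g x - h x) < \<delta>)"

lemma C0_approximableD:
  assumes "C0_approximable g" and "0 < \<delta>"
  obtains h where "h \<in> C0_pos" and "(\<lambda>x. g x - h x) \<in> L2_pos" and "L2sq (\<lambda>x. g x - h x) < \<delta>"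
proof -
  obtain h where h: "h \<in> C0_pos" "L2sq (\<lambda>x. g x - h x) < \<delta>"
    using assms unfolding C0_approximable_def by blast
  moreover have "g \<in> L2_pos" using assms(1) by (simp add: C0_approximable_def)
  ultimately show thesis using that L2_pos_diff(1)[OF _ C0_pos_imp_L2_pos[OF h(1)]] by blast
qed

lemma C0_approximable_C0:
  assumes "h \<in> C0_pos"
  shows "C0_approximable h"
  unfolding C0_approximable_def
  using assms C0_pos_imp_L2_pos[OF assms] by (auto intro!: bexI[of _ h] simp: L2sq_def)

lemma C0_approximable_limit:
  assumes g: "g \<in> L2_pos"
    and approx: "\<And>\<delta>. 0 < \<delta> \<Longrightarrow> \<exists>g'. C0_approximable g' \<and> L2sq (\<lambda>x. g x - g' x) < \<delta>"
  shows "C0_approximable g"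
  unfolding C0_approximable_def
proof (intro conjI g allI impI)
  fix \<delta> :: real assume "0 < \<delta>"
  then have "0 < \<delta> / 4" by simp
  then obtain g' where g': "C0_approximable g'" "L2sq (\<lambda>x. g x - g' x) < \<delta> / 4"
    using approx by blast
  obtain h where h: "h \<in> C0_pos" "(\<lambda>x. g' x - h x) \<in> L2_pos" "L2sq (\<lambda>x. g' x - h x) < \<delta> / 4"
    using g'(1) \<open>0 < \<delta> / 4\<close> by (rule C0_approximableD)
  have "(\<lambda>x. g x - g' x) \<in> L2_pos"
    using g g'(1) by (intro L2_pos_diff(1)) (auto simp: C0_approximable_def)
  then have "L2sq (\<lambda>x. g x - h x) \<le> 2 * L2sq (\<lambda>x. g x - g' x) + 2 * L2sq (\<lambda>x. g' x - h x)"
    using h(2) by (rule L2sq_diff_triangle)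
  then show "\<exists>h\<in>C0_pos. L2sq (\<lambda>x. g x - h x) < \<delta>" using g'(2) h by (intro bexI[of _ h]) auto
qed

lemma C0_approximable_add:
  assumes g1: "C0_approximable g1" and g2: "C0_approximable g2"
  shows "C0_approximable (\<lambda>x. g1 x + g2 x)"
  unfolding C0_approximable_def
proof (intro conjI allI impI)
  show "(\<lambda>x. g1 x + g2 x) \<in> L2_pos"
    using g1 g2 by (intro L2_pos_add(1)) (auto simp: C0_approximable_def)
  fix \<delta> :: real assume "0 < \<delta>"
  then have "0 < \<delta> / 4" by simp
  obtain h1 where h1: "h1 \<in> C0_pos" "(\<lambda>x. g1 x - h1 x) \<in> L2_pos" "L2sq (\<lambda>x. g1 x - h1 x) < \<delta> / 4"
    using g1 \<open>0 < \<delta> / 4\<close> by (rule C0_approximableD)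
  obtain h2 where h2: "h2 \<in> C0_pos" "(\<lambda>x. g2 x - h2 x) \<in> L2_pos" "L2sq (\<lambda>x. g2 x - h2 x) < \<delta> / 4"
    using g2 \<open>0 < \<delta> / 4\<close> by (rule C0_approximableD)
  have "L2sq (\<lambda>x. (g1 x + g2 x) - (h1 x + h2 x)) = L2sq (\<lambda>x. (g1 x - h1 x) + (g2 x - h2 x))"
    by (simp add: algebra_simps)
  also have "\<dots> \<le> 2 * L2sq (\<lambda>x. g1 x - h1 x) + 2 * L2sq (\<lambda>x. g2 x - h2 x)"
    by (rule L2_pos_add(2)[OF h1(2) h2(2)])
  finally show "\<exists>h\<in>C0_pos. L2sq (\<lambda>x. (g1 x + g2 x) - h x) < \<delta>"
    using h1(3) h2(3) C0_pos_add[OF h1(1) h2(1)] by (intro bexI) auto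
qed

lemma C0_approximable_scale:
  assumes g: "C0_approximable g"
  shows "C0_approximable (\<lambda>x. c * g x)"
  unfolding C0_approximable_def
proof (intro conjI allI impI)
  show "(\<lambda>x. c * g x) \<in> L2_pos"
    using g by (intro L2_pos_scale(1)) (simp add: C0_approximable_def)
  fix \<delta> :: real assume "0 < \<delta>"
  moreover have pos: "0 < (cmod c)\<^sup>2 + 1" by (metis add_nonneg_pos zero_le_power2 zero_less_one)
  ultimately have "0 < \<delta> / ((cmod c)\<^sup>2 + 1)" by simp
  then obtain h where h: "h \<in> C0_pos" "(\<lambda>x. g x - h x) \<in> L2_pos"
    "L2sq (\<lambda>x. g x - h x) < \<delta> / ((cmod c)\<^sup>2 + 1)"
    by (rule C0_approximableD[OF g])
  have "L2sq (\<lambda>x. c * g x - c * h x) = (cmod c)\<^sup>2 * L2sq (\<lambda>x. g x - h x)"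
    using L2_pos_scale(2)[OF h(2), of c] by (simp add: algebra_simps)
  also have "\<dots> \<le> ((cmod c)\<^sup>2 + 1) * L2sq (\<lambda>x. g x - h x)"
    by (intro mult_right_mono L2sq_nonneg) simp
  also have "\<dots> < \<delta>"
    using h(3) pos by (simp add: pos_less_divide_eq mult.commute)
  finally show "\<exists>h\<in>C0_pos. L2sq (\<lambda>x. c * g x - h x) < \<delta>"
    using C0_pos_scale[OF h(1), of c] by (intro bexI[of _ "\<lambda>x. c * h x"])
qed

lemma C0_approximable_sum:
  assumes "\<And>i. i \<in> I \<Longrightarrow> C0_approximable (g i)"
  shows "C0_approximable (\<lambda>x. \<Sum>i\<in>I. g i x)"
  using assms
proof (induction I rule: infinite_finite_induct)
  case (insert i I)
  then show ?case using C0_approximable_add[of "g i" "\<lambda>x. \<Sum>i\<in>I. g i x"] by simp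
qed (simp_all add: C0_approximable_C0 C0_pos_zero)

lemma lebesgue_closed_open_sandwich:
  assumes "A \<in> sets lebesgue" and "0 < e"
  obtains C U where "closed C" "open U" "C \<subseteq> A" "A \<subseteq> U" "U - C \<in> lmeasurable"
    "measure lebesgue (U - C) < e"
proof -
  have "0 < e / 2" using assms(2) by simp
  obtain C where C: "closed C" "C \<subseteq> A" "A - C \<in> lmeasurable" "emeasure lebesgue (A - C) < ennreal (e / 2)"
    using sets_lebesgue_inner_closed[OF assms(1) \<open>0 < e / 2\<close>] by blast
  obtain U where U: "open U" "A \<subseteq> U" "U - A \<in> lmeasurable" "emeasure lebesgue (U - A) < ennreal (e / 2)"
    using sets_lebesgue_outer_open[OF assms(1) \<open>0 < e / 2\<close>] by blast
  have UC: "U - C = (U - A) \<union> (A - C)" using C(2) U(2) by auto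
  have "measure lebesgue (U - A) < e / 2" "measure lebesgue (A - C) < e / 2"
    using U(3,4) C(3,4) by (simp_all add: emeasure_eq_measure2 ennreal_less_iff)
  moreover have "measure lebesgue (U - C) \<le> measure lebesgue (U - A) + measure lebesgue (A - C)"
    unfolding UC by (rule measure_Un_le) (use U(3) C(3) in auto)
  moreover have "U - C \<in> lmeasurable" unfolding UC using U(3) C(3) by (rule fmeasurable.Un)
  ultimately show thesis using that C(1,2) U(1,2) by simp
qed

lemma C0_approximable_indicator:
  assumes A: "A \<in> sets borel" and Ab: "A \<subseteq> {a..b}" and a: "0 < a"
  shows "C0_approximable (\<lambda>x. of_real (indicator A x))"
  unfolding C0_approximable_def
proof (intro conjI allI impI)
  show L2: "(\<lambda>x. complex_of_real (indicator A x)) \<in> L2_pos"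
    by (rule L2_pos_bounded_support[where M = 1 and b = b]) (use A Ab in \<open>auto simp: indicator_def\<close>)
  fix \<delta> :: real assume "0 < \<delta>"
  have "A \<in> sets lebesgue" using A by simp
  then obtain C U where C: "closed C" and U: "open U" and CU: "C \<subseteq> A" "A \<subseteq> U"
    and UC: "U - C \<in> lmeasurable" "measure lebesgue (U - C) < \<delta>"
    using \<open>0 < \<delta>\<close> by (rule lebesgue_closed_open_sandwich)
  define V where "V = U \<inter> {a / 2 <..< 2 * b}"
  have "open V" using U by (simp add: V_def open_Int)
  have AV: "A \<subseteq> V" using CU(2) Ab a by (force simp: V_def)
  obtain \<phi> :: "real \<Rightarrow> real" where \<phi>: "continuous_on UNIV \<phi>" "\<And>x. \<phi> x \<in> closed_segment 1 0"
    "\<And>x. x \<in> C \<Longrightarrow> \<phi> x = 1" "\<And>x. x \<in> - V \<Longrightarrow> \<phi> x = 0"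
  proof (rule Urysohn[where S = C and T = "- V" and a = 1 and b = 0])
    show "closed (- V)" using \<open>open V\<close> by (rule closed_Compl)
    show "C \<inter> - V = {}" using CU(1) AV by auto
  qed (use C in auto)
  define h where "h x = complex_of_real (\<phi> x)" for x
  have "h \<in> C0_pos"
    unfolding C0_pos_def
  proof (intro CollectI conjI exI[of _ "{a / 2..2 * b}"])
    show "continuous_on {0<..} h"
      unfolding h_def by (intro continuous_intros continuous_on_subset[OF \<phi>(1)]) auto
    show "\<forall>x. x \<notin> {a / 2..2 * b} \<longrightarrow> h x = 0" using \<phi>(4) by (auto simp: V_def h_def)
  qed (use a in auto)
  have VC: "V - C \<in> sets borel" using \<open>open V\<close> C by auto
  have "(cmod (of_real (indicator A x) - h x))\<^sup>2 \<le> indicator (V - C) x" for x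
  proof -
    have "0 \<le> \<phi> x" "\<phi> x \<le> 1" using \<phi>(2)[of x] by (auto simp: closed_segment_eq_real_ivl)
    moreover have "cmod (of_real (indicator A x) - h x) = \<bar>indicator A x - \<phi> x\<bar>"
      unfolding h_def by (metis norm_of_real of_real_diff)
    ultimately show ?thesis using \<phi>(3,4) CU(1) AV
      by (cases "x \<in> C"; cases "x \<in> V") (auto simp: indicator_def abs_square_le_1)
  qed
  moreover have "set_integrable lborel {0..} (indicator (V - C) :: real \<Rightarrow> real)"
  proof (rule set_integrable_bounded_support[where M = 1 and b = "2 * b"])
    show "(indicator (V - C) :: real \<Rightarrow> real) \<in> borel_measurable lborel"
      using VC by (intro borel_measurable_indicator) simp
  qed (auto simp: V_def indicator_def)
  ultimately have "L2sq (\<lambda>x. of_real (indicator A x) - h x) \<le> (LINT x:{0..}|lborel. indicator (V - C) x)"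
    by (intro L2sq_le_set_integral L2_pos_diff(1)[OF L2 C0_pos_imp_L2_pos[OF \<open>h \<in> C0_pos\<close>]])
  also have "\<dots> = measure lborel (V - C)"
  proof -
    have "(\<lambda>x. indicator {0..} x *\<^sub>R indicator (V - C) x) = (indicator (V - C) :: real \<Rightarrow> real)"
      using a by (auto simp: V_def indicator_def)
    then show ?thesis by (simp add: set_lebesgue_integral_def)
  qed
  also have "\<dots> = measure lebesgue (V - C)" using VC by simp
  also have "\<dots> \<le> measure lebesgue (U - C)"
    using VC UC(1) by (intro measure_mono_fmeasurable) (auto simp: V_def)
  finally show "\<exists>h\<in>C0_pos. L2sq (\<lambda>x. of_real (indicator A x) - h x) < \<delta>"
    using UC(2) \<open>h \<in> C0_pos\<close> by (intro bexI[of _ h]) auto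
qed

lemma staircase_approx:
  fixes y M :: real and N :: nat
  assumes y: "0 \<le> y" "y \<le> M" and M: "0 < M" and N: "0 < N"
  shows "\<bar>y - M / N * (\<Sum>i\<in>{1..N}. indicator {z. real i * M / N \<le> z} y)\<bar> \<le> M / N"
proof -
  define r where "r = y * N / M"
  define m where "m = nat \<lfloor>r\<rfloor>"
  have "0 \<le> r" "r \<le> N" using y M N by (simp_all add: r_def field_simps)
  then have r: "real m \<le> r" "r < real m + 1" "m \<le> N"
    unfolding m_def by linarith+
  have count: "(\<Sum>i\<in>{1..n}. (if i \<le> m then 1 else 0 :: real)) = min m n" for n
    by (induction n) (auto simp: atLeastAtMostSuc_conv min_def)
  have "indicator {z. real i * M / N \<le> z} y = (if i \<le> m then 1 else (0::real))" for i
  proof -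
    have "real i * M / N \<le> y \<longleftrightarrow> real i \<le> r" using M N by (simp add: r_def field_simps)
    also have "\<dots> \<longleftrightarrow> i \<le> m" using \<open>0 \<le> r\<close> by (simp add: m_def le_nat_iff le_floor_iff)
    finally show ?thesis by (simp add: indicator_def)
  qed
  then have eq: "y - M / N * (\<Sum>i\<in>{1..N}. indicator {z. real i * M / N \<le> z} y) = M / N * (r - m)"
    using count[of N] r(3) M N by (simp add: r_def min_def field_simps)
  have "0 \<le> M / N * (r - m)" using r M N by simp
  moreover have "M / N * (r - m) \<le> M / N * 1" using r M N by (intro mult_left_mono) auto
  ultimately show ?thesis unfolding eq by simp
qed

lemma C0_approximable_nonneg:
  fixes p :: "real \<Rightarrow> real"
  assumes meas: "p \<in> borel_measurable borel" and p0: "\<And>x. 0 \<le> p x" and pM: "\<And>x. p x \<le> M"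
    and supp: "\<And>x. p x \<noteq> 0 \<Longrightarrow> a \<le> x \<and> x \<le> b" and a: "0 < a" and ab: "a \<le> b"
  shows "C0_approximable (\<lambda>x. of_real (p x))"
proof (cases "0 < M")
  case False
  then have "(\<lambda>x. of_real (p x)) = (\<lambda>x. 0 :: complex)"
    using p0 pM by (intro ext) (metis antisym not_le of_real_0 order_trans)
  then show ?thesis using C0_approximable_C0[OF C0_pos_zero] by simp
next
  case M: True
  have outside: "p x = 0" if "x \<notin> {a..b}" for x using supp[of x] that by fastforce
  show ?thesis
  proof (rule C0_approximable_limit)
    show L2: "(\<lambda>x. of_real (p x)) \<in> L2_pos"
    proof (rule L2_pos_bounded_support[where M = M and b = b])
      show "(\<lambda>x. complex_of_real (p x)) \<in> borel_measurable lborel" using meas by measurable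
    qed (use p0 pM outside in auto)
    fix \<delta> :: real assume "0 < \<delta>"
    define K where "K = M\<^sup>2 * (b - a + 1)"
    have "0 < K" using M ab by (simp add: K_def)
    obtain N :: nat where N: "K / \<delta> < N" using reals_Archimedean2 by blast
    have "0 < K / \<delta>" using \<open>0 < K\<close> \<open>0 < \<delta>\<close> by simp
    then have "0 < N" using N by linarith
    define A where "A i = {x. real i * M / N \<le> p x}" for i :: nat
    define s :: "real \<Rightarrow> complex"
      where "s x = (\<Sum>i\<in>{1..N}. of_real (M / N) * of_real (indicator (A i) x))" for x
    have A: "A i \<in> sets borel" "A i \<subseteq> {a..b}" if "i \<in> {1..N}" for i
    proof -
      show "A i \<in> sets borel" unfolding A_def using meas by measurable
      have "0 < real i * M / N" using that M \<open>0 < N\<close> by simp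
      then show "A i \<subseteq> {a..b}" using outside by (force simp: A_def)
    qed
    have s: "C0_approximable s"
      unfolding s_def[abs_def]
      by (intro C0_approximable_sum C0_approximable_scale C0_approximable_indicator[OF A a])
    have "(cmod (of_real (p x) - s x))\<^sup>2 \<le> (M / N)\<^sup>2 * indicator {a..b} x" for x
    proof (cases "x \<in> {a..b}")
      case True
      have "s x = of_real (M / N * (\<Sum>i\<in>{1..N}. indicator {z. real i * M / N \<le> z} (p x)))"
      proof -
        have level: "indicator (A i) x = (indicator {z. real i * M / N \<le> z} (p x) :: real)" for i
          by (simp add: A_def indicator_def)
        show ?thesis by (simp only: s_def level of_real_mult of_real_sum sum_distrib_left)
      qed
      then have "cmod (of_real (p x) - s x) = \<bar>p x - M / N * (\<Sum>i\<in>{1..N}. indicator {z. real i * M / N \<le> z} (p x))\<bar>"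
        by (simp only: of_real_diff[symmetric] norm_of_real)
      also have "\<dots> \<le> M / N" by (rule staircase_approx[OF p0 pM M \<open>0 < N\<close>])
      finally have "(cmod (of_real (p x) - s x))\<^sup>2 \<le> (M / N)\<^sup>2" by (rule power_mono) simp
      then show ?thesis using True by simp
    next
      case False
      have "x \<notin> A i" if "i \<in> {1..N}" for i using A(2)[OF that] False by blast
      then have "s x = 0" unfolding s_def by (intro sum.neutral ballI) simp
      then show ?thesis using outside[OF False] False by simp
    qed
    moreover have "(\<lambda>x. of_real (p x) - s x) \<in> L2_pos"
      using L2 s by (intro L2_pos_diff(1)) (simp_all add: C0_approximable_def)
    moreover have "set_integrable lborel {0..} (\<lambda>x. (M / N)\<^sup>2 * indicator {a..b} x :: real)"
      by (rule set_integrable_bounded_support[where M = "(M / N)\<^sup>2" and b = b]) (auto simp: indicator_def)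
    ultimately have "L2sq (\<lambda>x. of_real (p x) - s x) \<le> (LINT x:{0..}|lborel. (M / N)\<^sup>2 * indicator {a..b} x)"
      by (intro L2sq_le_set_integral)
    also have "\<dots> = (M / N)\<^sup>2 * (b - a)"
    proof -
      have eq: "(\<lambda>x. indicator {0..} x *\<^sub>R ((M / N)\<^sup>2 * indicator {a..b} x)) = (\<lambda>x. (M / N)\<^sup>2 * indicator {a..b} x :: real)"
        using a by (auto simp: indicator_def)
      show ?thesis unfolding set_lebesgue_integral_def eq using ab by simp
    qed
    also have "\<dots> \<le> K / N"
    proof -
      have "(M / N)\<^sup>2 * (b - a) = M\<^sup>2 * (b - a) / N * (1 / N)" by (simp add: power2_eq_square)
      also have "\<dots> \<le> M\<^sup>2 * (b - a) / N" using ab \<open>0 < N\<close> by (intro mult_left_le) simp_all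
      also have "\<dots> \<le> K / N" unfolding K_def by (intro divide_right_mono mult_left_mono) simp_all
      finally show ?thesis .
    qed
    also have "\<dots> < \<delta>" using N \<open>0 < \<delta>\<close> \<open>0 < N\<close> by (simp add: field_simps)
    finally show "\<exists>g'. C0_approximable g' \<and> L2sq (\<lambda>x. of_real (p x) - g' x) < \<delta>" using s by blast
  qed
qed

lemma C0_approximable_real:
  fixes q :: "real \<Rightarrow> real"
  assumes meas: "q \<in> borel_measurable borel" and bd: "\<And>x. \<bar>q x\<bar> \<le> M"
    and supp: "\<And>x. q x \<noteq> 0 \<Longrightarrow> a \<le> x \<and> x \<le> b" and "0 < a" and "a \<le> b"
  shows "C0_approximable (\<lambda>x. of_real (q x))"
proof -
  have parts: "C0_approximable (\<lambda>x. of_real (max (\<sigma> * q x) 0))" if "\<bar>\<sigma>\<bar> = 1" for \<sigma> :: real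
  proof (rule C0_approximable_nonneg[where M = M and a = a and b = b])
    show "(\<lambda>x. max (\<sigma> * q x) 0) \<in> borel_measurable borel" using meas by measurable
    show "max (\<sigma> * q x) 0 \<le> M" for x using bd[of x] that by (auto simp: abs_if split: if_splits)
    show "a \<le> x \<and> x \<le> b" if "max (\<sigma> * q x) 0 \<noteq> 0" for x using that supp[of x] by force
  qed (use assms in auto)
  have "C0_approximable (\<lambda>x. of_real (max (1 * q x) 0) + (-1) * of_real (max ((-1) * q x) 0))"
    by (intro C0_approximable_add C0_approximable_scale parts) simp_all
  moreover have "of_real (max (1 * q x) 0) + (-1) * of_real (max ((-1) * q x) 0) = complex_of_real (q x)" for x
    by (simp add: max_def)
  ultimately show ?thesis by simp
qed

lemma C0_approximable_bounded:
  fixes g :: "real \<Rightarrow> complex"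
  assumes "g \<in> borel_measurable borel" and "\<And>x. cmod (g x) \<le> M"
    and "\<And>x. g x \<noteq> 0 \<Longrightarrow> a \<le> x \<and> x \<le> b" and "0 < a" and "a \<le> b"
  shows "C0_approximable g"
proof -
  have "C0_approximable (\<lambda>x. of_real (Re (g x)))" "C0_approximable (\<lambda>x. of_real (Im (g x)))"
    using assms abs_Re_le_cmod abs_Im_le_cmod
    by (intro C0_approximable_real[where M = M and a = a and b = b];
        force intro: order_trans simp: complex_eq_iff)+
  then have "C0_approximable (\<lambda>x. of_real (Re (g x)) + \<i> * of_real (Im (g x)))"
    by (intro C0_approximable_add C0_approximable_scale)
  then show ?thesis by (simp add: complex_eq[symmetric])
qed

lemma L2sq_dominated_convergence:
  assumes g: "g \<in> L2_pos" and meas: "\<And>n. G n \<in> borel_measurable borel"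
    and dom: "\<And>n x. cmod (g x - G n x) \<le> cmod (g x)"
    and lim: "\<And>x. 0 < x \<Longrightarrow> (\<lambda>n. G n x) \<longlonglongrightarrow> g x"
  shows "(\<lambda>n. L2sq (\<lambda>x. g x - G n x)) \<longlonglongrightarrow> 0"
proof -
  have [measurable]: "g \<in> borel_measurable borel" using g by (simp add: L2_pos_def)
  define S where "S n x = indicator {0..} x * (cmod (g x - G n x))\<^sup>2" for n x
  have "(\<lambda>n. integral\<^sup>L lborel (S n)) \<longlonglongrightarrow> integral\<^sup>L lborel (\<lambda>x::real. 0::real)"
  proof (rule Bochner_Integration.integral_dominated_convergence)
    show "integrable lborel (\<lambda>x. indicator {0..} x * (cmod (g x))\<^sup>2)"
      using g by (simp add: L2_pos_def set_integrable_def)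
    show "S n \<in> borel_measurable lborel" for n
      using meas[of n] unfolding S_def[abs_def] by measurable
    show "AE x in lborel. norm (S n x) \<le> indicator {0..} x * (cmod (g x))\<^sup>2" for n
      using dom by (intro AE_I2) (simp add: S_def indicator_def power_mono)
    show "AE x in lborel. (\<lambda>n. S n x) \<longlonglongrightarrow> 0"
      using AE_lborel_singleton[of 0]
    proof eventually_elim
      case (elim x)
      show ?case
      proof (cases "0 < x")
        case True
        then have "(\<lambda>n. cmod (g x - G n x)) \<longlonglongrightarrow> cmod (g x - g x)"
          by (intro tendsto_intros lim)
        then have "(\<lambda>n. indicator {0..} x * (cmod (g x - G n x))\<^sup>2) \<longlonglongrightarrow> indicator {0..} x * 0\<^sup>2"
          by (intro tendsto_intros) simp
        then show ?thesis by (simp add: S_def)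
      qed (use elim in \<open>simp add: S_def indicator_def\<close>)
    qed
  qed simp
  moreover have "L2sq (\<lambda>x. g x - G n x) = integral\<^sup>L lborel (S n)" for n
    by (simp add: L2sq_def S_def[abs_def] set_lebesgue_integral_def)
  ultimately show ?thesis by simp
qed

lemma L2_pos_imp_C0_approximable:
  assumes g: "g \<in> L2_pos"
  shows "C0_approximable g"
proof (rule C0_approximable_limit[OF g])
  have [measurable]: "g \<in> borel_measurable borel" using g by (simp add: L2_pos_def)
  define G where "G n x = (if 1 / real (Suc n) \<le> x \<and> x \<le> real (Suc n) \<and> cmod (g x) \<le> real (Suc n)
    then g x else 0)" for n :: nat and x :: real
  have [measurable]: "G n \<in> borel_measurable borel" for n unfolding G_def[abs_def] by measurable
  have approximable: "C0_approximable (G n)" for n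
  proof (rule C0_approximable_bounded[where M = "real (Suc n)" and a = "1 / real (Suc n)" and b = "real (Suc n)"])
    show "cmod (G n x) \<le> real (Suc n)" for x by (simp add: G_def)
    show "1 / real (Suc n) \<le> x \<and> x \<le> real (Suc n)" if "G n x \<noteq> 0" for x
      using that by (simp add: G_def split: if_splits)
    have "1 / real (Suc n) \<le> 1" by simp
    then show "1 / real (Suc n) \<le> real (Suc n)" by linarith
  qed simp_all
  have lim: "(\<lambda>n. L2sq (\<lambda>x. g x - G n x)) \<longlonglongrightarrow> 0"
  proof (rule L2sq_dominated_convergence[OF g])
    show "cmod (g x - G n x) \<le> cmod (g x)" for n x by (simp add: G_def)
    fix x :: real assume "0 < x"
    obtain m :: nat where m: "max (max (1 / x) x) (cmod (g x)) < m" using reals_Archimedean2 by blast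
    have "G n x = g x" if "m \<le> n" for n
    proof -
      have "1 / x < real (Suc n)" "x \<le> real (Suc n)" "cmod (g x) \<le> real (Suc n)" using m that by linarith+
      then show ?thesis using \<open>0 < x\<close> by (simp add: G_def field_simps)
    qed
    then show "(\<lambda>n. G n x) \<longlonglongrightarrow> g x"
      by (intro tendsto_eventually) (auto simp: eventually_sequentially)
  qed simp
  fix \<delta> :: real assume "0 < \<delta>"
  then obtain N where "\<forall>n\<ge>N. L2sq (\<lambda>x. g x - G n x) < \<delta>"
    using order_tendstoD(2)[OF lim] unfolding eventually_sequentially by blast
  then show "\<exists>g'. C0_approximable g' \<and> L2sq (\<lambda>x. g x - g' x) < \<delta>" using approximable by blast
qed

theorem mainTheorem8:
  shows "(\<forall>f\<in>C0_pos. L2norm (T_op f) = sqrt 2 * L2norm f)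
       \<and> (\<forall>g\<in>L2_pos. \<forall>e>0. \<exists>f\<in>C0_pos. L2norm (\<lambda>x. T_op f x - g x) < e)"
proof (intro conjI ballI allI impI)
  fix f assume "f \<in> C0_pos"
  then show "L2norm (T_op f) = sqrt 2 * L2norm f"
    by (simp add: L2norm_eq_sqrt_L2sq L2sq_T_op real_sqrt_mult)
next
  fix g and e :: real assume g: "g \<in> L2_pos" and "0 < e"
  then have \<delta>: "0 < e\<^sup>2 / 8" by simp
  obtain h where h: "h \<in> C0_pos" "(\<lambda>x. g x - h x) \<in> L2_pos" "L2sq (\<lambda>x. g x - h x) < e\<^sup>2 / 8"
    using L2_pos_imp_C0_approximable[OF g] \<delta> by (rule C0_approximableD)
  obtain f where f: "f \<in> C0_pos" "(\<lambda>x. T_op f x - h x) \<in> L2_pos" "L2sq (\<lambda>x. T_op f x - h x) < e\<^sup>2 / 8"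
    using h(1) \<delta> by (rule T_op_approximates_C0)
  have "(\<lambda>x. h x - g x) \<in> L2_pos" by (rule L2_pos_diff(1)[OF C0_pos_imp_L2_pos[OF h(1)] g])
  then have "L2sq (\<lambda>x. T_op f x - g x) \<le> 2 * L2sq (\<lambda>x. T_op f x - h x) + 2 * L2sq (\<lambda>x. h x - g x)"
    using f(2) by (intro L2sq_diff_triangle)
  also have "\<dots> < e\<^sup>2" using f(3) h(3) L2sq_diff_commute[of g h] zero_le_power2[of e] by linarith
  finally have "sqrt (L2sq (\<lambda>x. T_op f x - g x)) < sqrt (e\<^sup>2)" by (rule real_sqrt_less_mono)
  then have "L2norm (\<lambda>x. T_op f x - g x) < e" using \<open>0 < e\<close> by (simp add: L2norm_eq_sqrt_L2sq)
  then show "\<exists>f\<in>C0_pos. L2norm (\<lambda>x. T_op f x - g x) < e" using f(1) by blast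
qed

end
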